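(* Let $S\le T_n$ be a transformation monoid and $G$ the normalizer of $S$ in $S_n$. If every element of $SG$ has a square root in $SG$, then every element of $S$ has a square root in $S$.
   Context: A transformation monoid is a subsemigroup of $T_n$ containing the identity map; $G=\{g\in S_n:g^{-1}Sg=S\}$ and $SG=\{sg:s\in S,g\in G\}$, a semigroup. A square root of $x$ in a semigroup $U$ is an element $y\in U$ with $y^2=x$. *)

theory Defs
  imports Main
begin

text \<open>Transformations of the n-point set {0..<n}, represented as functions on nat
  that are the identity outside {0..<n}. Products are function composition.\<close>

definition Tn :: "nat \<Rightarrow> (nat \<Rightarrow> nat) set" where
  "Tn n = {f. (\<forall>i<n. f i < n) \<and> (\<forall>i\<ge>n. f i = i)}"

definition Sn :: "nat \<Rightarrow> (nat \<Rightarrow> nat) set" where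
  "Sn n = {f \<in> Tn n. bij f}"

definition transformation_monoid :: "nat \<Rightarrow> (nat \<Rightarrow> nat) set \<Rightarrow> bool" where
  "transformation_monoid n S \<longleftrightarrow> S \<subseteq> Tn n \<and> id \<in> S \<and> (\<forall>f\<in>S. \<forall>g\<in>S. f \<circ> g \<in> S)"

definition normalizer :: "nat \<Rightarrow> (nat \<Rightarrow> nat) set \<Rightarrow> (nat \<Rightarrow> nat) set" where
  "normalizer n S = {g \<in> Sn n. (\<lambda>s. inv g \<circ> s \<circ> g) ` S = S}"

definition setprod :: "(nat \<Rightarrow> nat) set \<Rightarrow> (nat \<Rightarrow> nat) set \<Rightarrow> (nat \<Rightarrow> nat) set" where
  "setprod S G = {s \<circ> g | s g. s \<in> S \<and> g \<in> G}"

end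

theory Submission
  imports Defs
begin

text \<open>The set \<open>SG\<close> is finite and, by hypothesis, squaring maps it onto itself. Choosing a
  square root in \<open>SG\<close> for each element gives an injective, hence bijective, self-map \<open>r\<close> of
  \<open>SG\<close>, so \<open>r\<^sup>k x = x\<close> for some \<open>k > 0\<close>. Squaring \<open>k\<close> times undoes \<open>r\<^sup>k\<close>, hence
  \<open>x = (x\<^bsup>2^(k-1)\<^esup>)\<^sup>2\<close>, and \<open>x\<^bsup>2^(k-1)\<^esup>\<close> lies in \<open>S\<close> because \<open>S\<close> is closed under
  products. No semigroup structure of \<open>SG\<close> is needed.\<close>

lemma finite_Tn: "finite (Tn n)"
proof -
  let ?extend = "\<lambda>xs i. if i < n then xs ! i else (i::nat)"
  let ?L = "{xs. set xs \<subseteq> {0..<n} \<and> length xs = n}"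
  have "finite ?L"
    using finite_lists_length_eq[of "{0..<n}" n] by simp
  moreover have "Tn n \<subseteq> ?extend ` ?L"
  proof
    fix f assume f: "f \<in> Tn n"
    have "f = ?extend (map f [0..<n])"
      using f unfolding Tn_def by (auto simp: fun_eq_iff)
    moreover have "map f [0..<n] \<in> ?L"
      using f unfolding Tn_def by auto
    ultimately show "f \<in> ?extend ` ?L" by (rule image_eqI)
  qed
  ultimately show ?thesis by (rule finite_surj)
qed

lemma comp_in_Tn: "f \<in> Tn n \<Longrightarrow> g \<in> Tn n \<Longrightarrow> f \<circ> g \<in> Tn n"
  unfolding Tn_def by simp

lemma normalizer_subset_Tn: "normalizer n S \<subseteq> Tn n"
  unfolding normalizer_def Sn_def by blast

lemma id_in_normalizer: "id \<in> normalizer n S"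
  by (auto simp: normalizer_def Sn_def Tn_def)

lemma setprod_subset_Tn: "S \<subseteq> Tn n \<Longrightarrow> G \<subseteq> Tn n \<Longrightarrow> setprod S G \<subseteq> Tn n"
  unfolding setprod_def by (auto intro: comp_in_Tn)

lemma subset_setprod:
  assumes "id \<in> G" shows "S \<subseteq> setprod S G"
proof
  fix s assume "s \<in> S"
  moreover have "s = s \<circ> id" by simp
  ultimately show "s \<in> setprod S G"
    unfolding setprod_def using assms by blast
qed

lemma funpow_eq_self_if_inj_on_finite:
  assumes "finite M" "r ` M \<subseteq> M" "inj_on r M" "x \<in> M"
  obtains k where "k > 0" "(r ^^ k) x = x"
proof -
  have bij: "bij_betw (r ^^ k) M M" for k
    using assms(1-3) by (intro bij_betw_funpow) (simp add: bij_betw_def endo_inj_surj)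
  then have "range (\<lambda>k. (r ^^ k) x) \<subseteq> M"
    using assms(4) bij_betwE by blast
  then have "\<not> inj (\<lambda>k. (r ^^ k) x)"
    using assms(1) finite_imageD finite_subset infinite_UNIV_nat by blast
  then obtain i j where "i < j" "(r ^^ i) x = (r ^^ j) x"
    by (metis (no_types, lifting) injI linorder_neqE_nat)
  then have "(r ^^ i) ((r ^^ (j - i)) x) = (r ^^ i) x"
    by (metis funpow_add comp_apply le_add_diff_inverse less_imp_le)
  moreover have "(r ^^ (j - i)) x \<in> M"
    using bij assms(4) bij_betwE by blast
  ultimately have "(r ^^ (j - i)) x = x"
    using bij[of i] assms(4) by (auto simp: bij_betw_def dest: inj_onD)
  with \<open>i < j\<close> show thesis by (intro that[of "j - i"]) simp_all
qed

lemma funpow_right_inverse_on: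
  assumes "\<And>z. z \<in> M \<Longrightarrow> f (r z) = z" "r ` M \<subseteq> M" "z \<in> M"
  shows "(f ^^ k) ((r ^^ k) z) = z"
proof (induction k)
  case (Suc k)
  have "(r ^^ k) z \<in> M"
    using assms(2,3) by (induction k) auto
  moreover have "(f ^^ Suc k) ((r ^^ Suc k) z) = (f ^^ k) (f (r ((r ^^ k) z)))"
    by (simp add: funpow_swap1)
  ultimately show ?case
    using Suc assms(1) by simp
qed simp

lemma finite_surj_on_invariant_subset:
  assumes "finite M" "M \<subseteq> f ` M" "S \<subseteq> M" "f ` S \<subseteq> S"
  shows "S \<subseteq> f ` S"
proof
  fix x assume "x \<in> S"
  then have "x \<in> M" using assms(3) by blast
  define r where "r z = (SOME y. y \<in> M \<and> f y = z)" for z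
  have r: "r z \<in> M \<and> f (r z) = z" if "z \<in> M" for z
  proof -
    have "\<exists>y. y \<in> M \<and> f y = z" using assms(2) that by blast
    then show ?thesis unfolding r_def by (rule someI_ex)
  qed
  have "r ` M \<subseteq> M"
    using r by blast
  moreover have "inj_on r M"
    by (rule inj_on_inverseI[where g = f]) (use r in blast)
  ultimately obtain k where "k > 0" "(r ^^ k) x = x"
    using funpow_eq_self_if_inj_on_finite[OF assms(1) _ _ \<open>x \<in> M\<close>] by metis
  have "(f ^^ k) ((r ^^ k) x) = x"
    by (rule funpow_right_inverse_on[where M = M]) (use r \<open>r ` M \<subseteq> M\<close> \<open>x \<in> M\<close> in auto)
  moreover obtain m where "k = Suc m"
    using \<open>k > 0\<close> gr0_implies_Suc by blast
  ultimately have "f ((f ^^ m) x) = x"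
    using \<open>(r ^^ k) x = x\<close> by simp
  moreover have "(f ^^ m) x \<in> S"
    using \<open>x \<in> S\<close> assms(4) by (induction m) auto
  ultimately show "x \<in> f ` S" by (rule image_eqI[OF sym])
qed

theorem corollary4p9:
  fixes n :: nat and S :: "(nat \<Rightarrow> nat) set"
  assumes "transformation_monoid n S"
    and "\<forall>x \<in> setprod S (normalizer n S). \<exists>y \<in> setprod S (normalizer n S). y \<circ> y = x"
  shows "\<forall>x \<in> S. \<exists>y \<in> S. y \<circ> y = x"
proof -
  let ?SG = "setprod S (normalizer n S)"
  let ?square = "\<lambda>y :: nat \<Rightarrow> nat. y \<circ> y"
  have "S \<subseteq> Tn n" and closed: "\<forall>f\<in>S. \<forall>g\<in>S. f \<circ> g \<in> S"
    using assms(1) unfolding transformation_monoid_def by blast+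
  then have "finite ?SG"
    using finite_subset[OF setprod_subset_Tn[OF _ normalizer_subset_Tn] finite_Tn] by blast
  moreover have "?SG \<subseteq> ?square ` ?SG"
    using assms(2) by fastforce
  moreover have "S \<subseteq> ?SG"
    by (rule subset_setprod[OF id_in_normalizer])
  moreover have "?square ` S \<subseteq> S"
    using closed by blast
  ultimately have "S \<subseteq> ?square ` S"
    by (rule finite_surj_on_invariant_subset)
  then show ?thesis by blast
qed

end
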